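(* Let $a,b,c\in\mathbf S^2$ be the corners of a spherical triangle $\Delta(abc)$ whose sides $\overline{bc}$ and $\overline{ca}$ have length less than $\pi$, and let $\alpha,\beta,\gamma$ be the midpoints of the sides $\overline{bc},\overline{ca},\overline{ab}$ respectively. Then $$\operatorname{sign}\langle\alpha,\gamma\rangle_E=\operatorname{sign}\langle\beta,\gamma\rangle_E=\operatorname{sign}\big(\langle b,\gamma\rangle_E+\langle c,\gamma\rangle_E\big)\qquad(\operatorname{sign}\in\{-1,0,1\}),$$ and if $\langle\alpha,\gamma\rangle_E=\langle\beta,\gamma\rangle_E=0$ then also $\langle\alpha,\beta\rangle_E=0$.
   Context: $\mathbf S^2\subset\mathbf R^3$ is the unit sphere with Euclidean inner product $\langle\cdot,\cdot\rangle_E$. A spherical (geodesic) triangle $\Delta(abc)$ consists of three points $a,b,c\in\mathbf S^2$ together with, for each pair of corners, a choice of one of the great-circle arcs joining them (its sides $\overline{bc},\overline{ca},\overline{ab}$), such that at most one side has length $\ge\pi$. The midpoint of a side is the point on that arc at equal arc-length distance from its two endpoints. *)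

theory Defs
  imports "HOL-Analysis.Analysis"
begin

definition on_sphere :: "real^3 \<Rightarrow> bool" where
  "on_sphere x \<longleftrightarrow> norm x = 1"

text \<open>A great-circle arc starting at p, with initial unit tangent direction u
  (orthogonal to p) and arc length L (0 \<le> L \<le> 2 pi), is the curve
  t \<mapsto> cos t p + sin t u for t in [0, L].  great_arc p q u L says that
  this arc joins p to q.\<close>
definition great_arc :: "real^3 \<Rightarrow> real^3 \<Rightarrow> real^3 \<Rightarrow> real \<Rightarrow> bool" where
  "great_arc p q u L \<longleftrightarrow>
     on_sphere p \<and> norm u = 1 \<and> p \<bullet> u = 0 \<and> 0 \<le> L \<and> L \<le> 2 * pi \<and>
     q = cos L *\<^sub>R p + sin L *\<^sub>R u"

definition arc_midpoint :: "real^3 \<Rightarrow> real^3 \<Rightarrow> real \<Rightarrow> real^3" where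
  "arc_midpoint p u L = cos (L / 2) *\<^sub>R p + sin (L / 2) *\<^sub>R u"

end

theory Submission
  imports Defs
begin

text \<open>The midpoint of a side is, up to the factor 2 cos(L/2), the sum of its endpoints; for sides
  shorter than \<pi> this factor is positive. Hence \<langle>\<alpha>,\<gamma>\<rangle> and \<langle>\<beta>,\<gamma>\<rangle> are positive multiples of
  \<langle>b+c,\<gamma>\<rangle> and \<langle>c+a,\<gamma>\<rangle>, which agree because \<gamma> is equidistant from a and b. Moreover
  \<langle>b+c,c+a\<rangle> = \<langle>a+b,b+c\<rangle> since |b| = |c|, so \<langle>\<alpha>,\<beta>\<rangle> is a multiple of \<langle>\<gamma>,\<alpha>\<rangle>.\<close>

lemma great_arc_endpoint_sum:
  assumes "great_arc p q u L"
  shows "p + q = (2 * cos (L / 2)) *\<^sub>R arc_midpoint p u L"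
proof -
  have "q = cos (2 * (L / 2)) *\<^sub>R p + sin (2 * (L / 2)) *\<^sub>R u"
    using assms by (simp add: great_arc_def)
  then show ?thesis
    unfolding arc_midpoint_def cos_double_cos sin_double
    by (simp add: algebra_simps power2_eq_square)
qed

lemma arc_midpoint_eq_pos_scaled_sum:
  assumes "great_arc p q u L" and "L < pi"
  obtains k where "k > 0" and "arc_midpoint p u L = k *\<^sub>R (p + q)"
proof
  have "0 \<le> L" using assms(1) by (simp add: great_arc_def)
  with assms(2) show "inverse (2 * cos (L / 2)) > 0"
    by (simp add: cos_gt_zero_pi)
  then show "arc_midpoint p u L = inverse (2 * cos (L / 2)) *\<^sub>R (p + q)"
    by (simp add: great_arc_endpoint_sum[OF assms(1)])
qed

lemma inner_arc_midpoint_endpoints: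
  assumes "great_arc p q u L"
  shows "p \<bullet> arc_midpoint p u L = cos (L / 2)" and "q \<bullet> arc_midpoint p u L = cos (L / 2)"
proof -
  have pp: "p \<bullet> p = 1" and uu: "u \<bullet> u = 1" and pu: "p \<bullet> u = 0" "u \<bullet> p = 0"
    using assms by (auto simp: great_arc_def on_sphere_def norm_eq_sqrt_inner inner_commute)
  show "p \<bullet> arc_midpoint p u L = cos (L / 2)"
    by (simp add: arc_midpoint_def inner_add_right pp pu)
  have "q \<bullet> arc_midpoint p u L = cos L * cos (L / 2) + sin L * sin (L / 2)"
    using assms by (simp add: great_arc_def arc_midpoint_def inner_add_left inner_add_right pp pu uu)
  also have "\<dots> = cos (L - L / 2)"
    by (rule cos_diff[symmetric])
  finally show "q \<bullet> arc_midpoint p u L = cos (L / 2)"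
    by simp
qed

lemma inner_add_add_eq_of_norm_eq:
  fixes a b c :: "'a::real_inner"
  assumes "norm b = norm c"
  shows "(b + c) \<bullet> (c + a) = (a + b) \<bullet> (b + c)"
proof -
  have "b \<bullet> b = c \<bullet> c"
    using assms by (simp add: norm_eq_sqrt_inner)
  then show ?thesis
    by (simp add: inner_add_left inner_add_right inner_commute)
qed

theorem mainTheorem2:
  fixes a b c u_bc u_ca u_ab :: "real^3" and L_bc L_ca L_ab :: real
  assumes "on_sphere a" and "on_sphere b" and "on_sphere c"
    and "great_arc b c u_bc L_bc" and "great_arc c a u_ca L_ca" and "great_arc a b u_ab L_ab"
    and "L_bc < pi" and "L_ca < pi"
  defines "\<alpha> \<equiv> arc_midpoint b u_bc L_bc"
    and "\<beta> \<equiv> arc_midpoint c u_ca L_ca"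
    and "\<gamma> \<equiv> arc_midpoint a u_ab L_ab"
  shows "sgn (\<alpha> \<bullet> \<gamma>) = sgn (\<beta> \<bullet> \<gamma>)
     \<and> sgn (\<beta> \<bullet> \<gamma>) = sgn (b \<bullet> \<gamma> + c \<bullet> \<gamma>)
     \<and> (\<alpha> \<bullet> \<gamma> = 0 \<and> \<beta> \<bullet> \<gamma> = 0 \<longrightarrow> \<alpha> \<bullet> \<beta> = 0)"
proof -
  obtain k\<^sub>\<alpha> where "k\<^sub>\<alpha> > 0" and \<alpha>: "\<alpha> = k\<^sub>\<alpha> *\<^sub>R (b + c)"
    using arc_midpoint_eq_pos_scaled_sum[OF assms(4,7)] \<alpha>_def by blast
  obtain k\<^sub>\<beta> where "k\<^sub>\<beta> > 0" and \<beta>: "\<beta> = k\<^sub>\<beta> *\<^sub>R (c + a)"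
    using arc_midpoint_eq_pos_scaled_sum[OF assms(5,8)] \<beta>_def by blast
  have ab_\<gamma>: "a + b = (2 * cos (L_ab / 2)) *\<^sub>R \<gamma>"
    using great_arc_endpoint_sum[OF assms(6)] \<gamma>_def by simp
  have "a \<bullet> \<gamma> = b \<bullet> \<gamma>"
    using inner_arc_midpoint_endpoints[OF assms(6)] \<gamma>_def by simp
  then have \<alpha>\<gamma>: "\<alpha> \<bullet> \<gamma> = k\<^sub>\<alpha> * (b \<bullet> \<gamma> + c \<bullet> \<gamma>)" and \<beta>\<gamma>: "\<beta> \<bullet> \<gamma> = k\<^sub>\<beta> * (b \<bullet> \<gamma> + c \<bullet> \<gamma>)"
    by (simp_all add: \<alpha> \<beta> inner_add_left)
  have "\<alpha> \<bullet> \<beta> = k\<^sub>\<alpha> * k\<^sub>\<beta> * ((a + b) \<bullet> (b + c))"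
    using inner_add_add_eq_of_norm_eq[of b c a] assms(2,3) by (simp add: \<alpha> \<beta> on_sphere_def)
  also have "\<dots> = k\<^sub>\<beta> * (2 * cos (L_ab / 2)) * (\<alpha> \<bullet> \<gamma>)"
    by (simp add: ab_\<gamma> \<alpha> inner_commute)
  finally have "\<alpha> \<bullet> \<beta> = k\<^sub>\<beta> * (2 * cos (L_ab / 2)) * (\<alpha> \<bullet> \<gamma>)" .
  with \<alpha>\<gamma> \<beta>\<gamma> \<open>k\<^sub>\<alpha> > 0\<close> \<open>k\<^sub>\<beta> > 0\<close> show ?thesis
    by (simp add: sgn_mult)
qed

end
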